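(* Let $R$ be a unital, non-associative ring, let $\sigma,\delta\colon R\to R$ be left $R$-additive maps, and consider the non-associative Ore extension $R[X;\sigma,\delta]$. Let $\alpha$ be a ring endomorphism of $R$ such that there exists $a\in R$ with $\alpha(a)=1$. Then the homogeneous extension of $\alpha$ to $R[X;\sigma,\delta]$ is a ring endomorphism if and only if $\alpha\circ\delta=\delta\circ\alpha$ and $\alpha\circ\sigma=\sigma\circ\alpha$.
   Context: "Non-associative" means not necessarily associative. $\mathbb{N}$ denotes the non-negative integers. A map $\beta\colon R\to R$ is left $R$-additive if $r\cdot\beta(s+t)=r\cdot(\beta(s)+\beta(t))$ for all $r,s,t\in R$. For $m\in\mathbb{N}$ and $0\le i\le m$, $\pi_i^m\colon R\to R$ denotes the sum of all $\binom{m}{i}$ compositions of $i$ copies of $\sigma$ and $m-i$ copies of $\delta$ in arbitrary order ($\pi_0^0=\mathrm{id}_R$), and $\pi_i^m:=0$ if $i<0$ or $i>m$. The non-associative Ore extension $R[X;\sigma,\delta]$ is the set of formal sums $\sum_{i\in\mathbb{N}}a_iX^i$ with $a_i\in R$, finitely many nonzero, with coefficientwise addition and the distributive multiplication determined by $aX^m\cdot bX^n=\sum_{i\in\mathbb{N}}(a\cdot\pi_i^m(b))X^{i+n}$. An additive map $\gamma\colon R\to R$ is extended homogeneously by $\gamma\left(\sum_i a_iX^i\right):=\sum_i\gamma(a_i)X^i$. *)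

theory Defs
  imports Main
begin

definition nonassoc_ring_1 :: "('a::{ab_group_add,times,one}) itself \<Rightarrow> bool" where
  "nonassoc_ring_1 _ \<longleftrightarrow>
     (\<forall>a b c :: 'a. (a + b) * c = a * c + b * c) \<and>
     (\<forall>a b c :: 'a. a * (b + c) = a * b + a * c) \<and>
     (\<forall>a :: 'a. 1 * a = a \<and> a * 1 = a)"

definition left_R_additive :: "('a::{plus,times} \<Rightarrow> 'a) \<Rightarrow> bool" where
  "left_R_additive \<beta> \<longleftrightarrow> (\<forall>r s t. r * \<beta> (s + t) = r * (\<beta> s + \<beta> t))"

definition ring_endo :: "('a::{plus,times} \<Rightarrow> 'a) \<Rightarrow> bool" where
  "ring_endo f \<longleftrightarrow> (\<forall>x y. f (x + y) = f x + f y) \<and> (\<forall>x y. f (x * y) = f x * f y)"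

text \<open>pi i m: sum of all compositions of i copies of sigma and m-i copies of delta,
  encoded as words over bool (True = sigma, False = delta); zero if i > m.\<close>
definition ore_pi :: "('a \<Rightarrow> 'a) \<Rightarrow> ('a \<Rightarrow> 'a) \<Rightarrow> nat \<Rightarrow> nat \<Rightarrow> 'a \<Rightarrow> ('a::comm_monoid_add)" where
  "ore_pi \<sigma> \<delta> i m x =
     (\<Sum>w\<in>{w. length w = m \<and> length (filter id w) = i}.
        foldr (\<lambda>b f. (if b then \<sigma> else \<delta>) \<circ> f) w id x)"

text \<open>Elements of R[X; sigma, delta]: finitely supported coefficient sequences.\<close>
definition ore_carrier :: "(nat \<Rightarrow> 'a::zero) set" where
  "ore_carrier = {p. finite {n. p n \<noteq> 0}}"

definition ore_add :: "(nat \<Rightarrow> 'a::plus) \<Rightarrow> (nat \<Rightarrow> 'a) \<Rightarrow> nat \<Rightarrow> 'a" where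
  "ore_add p q = (\<lambda>k. p k + q k)"

definition ore_mult :: "('a \<Rightarrow> 'a) \<Rightarrow> ('a \<Rightarrow> 'a) \<Rightarrow> (nat \<Rightarrow> 'a::{comm_monoid_add,times})
    \<Rightarrow> (nat \<Rightarrow> 'a) \<Rightarrow> nat \<Rightarrow> 'a" where
  "ore_mult \<sigma> \<delta> p q = (\<lambda>k. \<Sum>m\<in>{m. p m \<noteq> 0}. \<Sum>n\<in>{n. q n \<noteq> 0}.
      \<Sum>i\<in>{..m}. if i + n = k then p m * ore_pi \<sigma> \<delta> i m (q n) else 0)"

definition hom_ext :: "('a \<Rightarrow> 'a) \<Rightarrow> (nat \<Rightarrow> 'a) \<Rightarrow> nat \<Rightarrow> 'a" where
  "hom_ext \<gamma> p = (\<lambda>k. \<gamma> (p k))"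

definition ore_ring_endo :: "('a \<Rightarrow> 'a) \<Rightarrow> ('a \<Rightarrow> 'a) \<Rightarrow>
    ((nat \<Rightarrow> 'a::{comm_monoid_add,times}) \<Rightarrow> (nat \<Rightarrow> 'a)) \<Rightarrow> bool" where
  "ore_ring_endo \<sigma> \<delta> F \<longleftrightarrow>
     (\<forall>p\<in>ore_carrier. F p \<in> ore_carrier) \<and>
     (\<forall>p\<in>ore_carrier. \<forall>q\<in>ore_carrier. F (ore_add p q) = ore_add (F p) (F q)) \<and>
     (\<forall>p\<in>ore_carrier. \<forall>q\<in>ore_carrier. F (ore_mult \<sigma> \<delta> p q) = ore_mult \<sigma> \<delta> (F p) (F q))"

end

theory Submission
  imports Defs "HOL.Modules"
begin

text \<open>Multiplying the monomial a X by a constant b gives a \<delta>(b) + a \<sigma>(b) X. So if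
the homogeneous extension of \<alpha> is multiplicative and \<alpha> a = 1, comparing coefficients
yields \<alpha> \<circ> \<delta> = \<delta> \<circ> \<alpha> and \<alpha> \<circ> \<sigma> = \<sigma> \<circ> \<alpha>. Conversely, if \<alpha> commutes with \<sigma> and \<delta>
it commutes with every composite pi_i^m of them, and being additive and multiplicative it
then commutes with each term a pi_i^m(b) of the product formula.\<close>

lemma nonassoc_ring_1_additive_mult:
  assumes "nonassoc_ring_1 TYPE('a::{ab_group_add,times,one})"
  shows "additive (\<lambda>y::'a. x * y)" and "additive (\<lambda>y::'a. y * x)"
  using assms unfolding nonassoc_ring_1_def by (auto intro: additive.intro)

lemma nonassoc_ring_1_mult_zero:
  assumes "nonassoc_ring_1 TYPE('a::{ab_group_add,times,one})"
  shows "0 * x = (0::'a)" and "x * 0 = (0::'a)"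
  using additive.zero[OF nonassoc_ring_1_additive_mult(2)[OF assms]]
    additive.zero[OF nonassoc_ring_1_additive_mult(1)[OF assms]] by auto

lemma left_R_additive_imp_additive:
  assumes "nonassoc_ring_1 TYPE('a::{ab_group_add,times,one})" and "left_R_additive \<beta>"
  shows "additive (\<beta> :: 'a \<Rightarrow> 'a)"
proof
  fix x y :: 'a
  show "\<beta> (x + y) = \<beta> x + \<beta> y"
    using assms unfolding nonassoc_ring_1_def left_R_additive_def by metis
qed

lemma ring_endo_imp_additive: "ring_endo \<alpha> \<Longrightarrow> additive \<alpha>"
  unfolding ring_endo_def by (auto intro: additive.intro)

lemma ring_endo_mult: "ring_endo \<alpha> \<Longrightarrow> \<alpha> (x * y) = \<alpha> x * \<alpha> y"
  unfolding ring_endo_def by blast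

lemma ore_pi_zero:
  fixes \<sigma> \<delta> :: "'a \<Rightarrow> 'a::comm_monoid_add"
  assumes "\<sigma> 0 = 0" and "\<delta> 0 = 0"
  shows "ore_pi \<sigma> \<delta> i m 0 = 0"
proof -
  have "foldr (\<lambda>b f. (if b then \<sigma> else \<delta>) \<circ> f) w id 0 = 0" for w
    using assms by (induction w) auto
  then show ?thesis
    unfolding ore_pi_def by simp
qed

lemma ore_pi_0_Suc_0: "ore_pi \<sigma> \<delta> 0 (Suc 0) x = \<delta> x"
proof -
  have "{w. length w = Suc 0 \<and> length (filter id w) = 0} = {[False]}"
    by (auto simp: length_Suc_conv)
  then show ?thesis
    unfolding ore_pi_def by simp
qed

lemma ore_pi_Suc_0_Suc_0: "ore_pi \<sigma> \<delta> (Suc 0) (Suc 0) x = \<sigma> x"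
proof -
  have "{w. length w = Suc 0 \<and> length (filter id w) = Suc 0} = {[True]}"
    by (auto simp: length_Suc_conv split: if_splits)
  then show ?thesis
    unfolding ore_pi_def by simp
qed

lemma additive_ore_pi_commute:
  assumes "additive \<alpha>" and "\<alpha> \<circ> \<sigma> = \<sigma> \<circ> \<alpha>" and "\<alpha> \<circ> \<delta> = \<delta> \<circ> \<alpha>"
  shows "\<alpha> (ore_pi \<sigma> \<delta> i m x) = ore_pi \<sigma> \<delta> i m (\<alpha> x)"
proof -
  have "\<alpha> (foldr (\<lambda>b f. (if b then \<sigma> else \<delta>) \<circ> f) w id x)
      = foldr (\<lambda>b f. (if b then \<sigma> else \<delta>) \<circ> f) w id (\<alpha> x)" for w
    using assms(2,3) by (induction w) (auto simp: fun_eq_iff)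
  then show ?thesis
    unfolding ore_pi_def additive.sum[OF assms(1)] by simp
qed

lemma ore_mult_eq_sum_superset:
  fixes p q :: "nat \<Rightarrow> 'a::{comm_monoid_add,times}"
  assumes "finite A" and "finite B" and "{m. p m \<noteq> 0} \<subseteq> A" and "{n. q n \<noteq> 0} \<subseteq> B"
    and "\<And>x::'a. 0 * x = 0" and "\<And>x::'a. x * 0 = 0" and "\<And>i m. ore_pi \<sigma> \<delta> i m 0 = 0"
  shows "ore_mult \<sigma> \<delta> p q k
    = (\<Sum>m\<in>A. \<Sum>n\<in>B. \<Sum>i\<le>m. if i + n = k then p m * ore_pi \<sigma> \<delta> i m (q n) else 0)"
proof -
  have inner: "(\<Sum>n\<in>{n. q n \<noteq> 0}. \<Sum>i\<le>m. if i + n = k then p m * ore_pi \<sigma> \<delta> i m (q n) else 0)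
      = (\<Sum>n\<in>B. \<Sum>i\<le>m. if i + n = k then p m * ore_pi \<sigma> \<delta> i m (q n) else 0)" for m
    using assms(2,4) by (intro sum.mono_neutral_left) (auto simp: assms(6,7) cong: if_cong)
  show ?thesis
    unfolding ore_mult_def inner using assms(1,3)
    by (intro sum.mono_neutral_left) (auto simp: assms(5) cong: if_cong)
qed

definition ore_monom :: "'a::zero \<Rightarrow> nat \<Rightarrow> nat \<Rightarrow> 'a" where
  "ore_monom c m = (\<lambda>k. if k = m then c else 0)"

lemma ore_monom_in_carrier: "ore_monom c m \<in> ore_carrier"
proof -
  have "{k. ore_monom c m k \<noteq> 0} \<subseteq> {m}"
    unfolding ore_monom_def by auto
  then show ?thesis
    unfolding ore_carrier_def using finite_subset by blast
qed

lemma ore_mult_X_const: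
  fixes c d :: "'a::{comm_monoid_add,times}"
  assumes "\<And>x::'a. 0 * x = 0" and "\<And>x::'a. x * 0 = 0" and "\<And>i m. ore_pi \<sigma> \<delta> i m 0 = 0"
  shows "ore_mult \<sigma> \<delta> (ore_monom c 1) (ore_monom d 0) k
    = (if k = 0 then c * \<delta> d else if k = 1 then c * \<sigma> d else 0)"
proof -
  have "ore_mult \<sigma> \<delta> (ore_monom c 1) (ore_monom d 0) k
      = (\<Sum>i\<le>1. if i = k then c * ore_pi \<sigma> \<delta> i 1 d else 0)"
    using assms by (subst ore_mult_eq_sum_superset[where A = "{1}" and B = "{0}"])
      (auto simp: ore_monom_def)
  then show ?thesis
    by (simp add: atMost_Suc ore_pi_0_Suc_0 ore_pi_Suc_0_Suc_0)
qed

lemma hom_ext_ore_monom: "\<gamma> 0 = 0 \<Longrightarrow> hom_ext \<gamma> (ore_monom c m) = ore_monom (\<gamma> c) m"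
  unfolding hom_ext_def ore_monom_def by auto

lemma hom_ext_support_subset: "\<gamma> 0 = 0 \<Longrightarrow> {n. hom_ext \<gamma> p n \<noteq> 0} \<subseteq> {n. p n \<noteq> 0}"
  unfolding hom_ext_def by auto

lemma hom_ext_in_carrier: "\<gamma> 0 = 0 \<Longrightarrow> p \<in> ore_carrier \<Longrightarrow> hom_ext \<gamma> p \<in> ore_carrier"
  unfolding ore_carrier_def using hom_ext_support_subset finite_subset by blast

lemma hom_ext_ore_add: "additive \<gamma> \<Longrightarrow> hom_ext \<gamma> (ore_add p q) = ore_add (hom_ext \<gamma> p) (hom_ext \<gamma> q)"
  unfolding hom_ext_def ore_add_def by (simp add: additive.add)

lemma hom_ext_ore_mult:
  fixes \<alpha> :: "'a::{ab_group_add,times} \<Rightarrow> 'a"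
  assumes "additive \<alpha>" and "\<And>x y. \<alpha> (x * y) = \<alpha> x * \<alpha> y"
    and "\<And>i m x. \<alpha> (ore_pi \<sigma> \<delta> i m x) = ore_pi \<sigma> \<delta> i m (\<alpha> x)"
    and "\<And>x::'a. 0 * x = 0" and "\<And>x::'a. x * 0 = 0" and "\<And>i m. ore_pi \<sigma> \<delta> i m 0 = 0"
    and "p \<in> ore_carrier" and "q \<in> ore_carrier"
  shows "hom_ext \<alpha> (ore_mult \<sigma> \<delta> p q) = ore_mult \<sigma> \<delta> (hom_ext \<alpha> p) (hom_ext \<alpha> q)"
proof
  fix k
  let ?A = "{m. p m \<noteq> 0}" and ?B = "{n. q n \<noteq> 0}"
  have fin: "finite ?A" "finite ?B"
    using assms(7,8) unfolding ore_carrier_def by auto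
  have \<alpha>0: "\<alpha> 0 = 0"
    using additive.zero[OF assms(1)] .
  have "hom_ext \<alpha> (ore_mult \<sigma> \<delta> p q) k
      = (\<Sum>m\<in>?A. \<Sum>n\<in>?B. \<Sum>i\<le>m. \<alpha> (if i + n = k then p m * ore_pi \<sigma> \<delta> i m (q n) else 0))"
    unfolding hom_ext_def ore_mult_def additive.sum[OF assms(1)] ..
  also have "\<dots> = (\<Sum>m\<in>?A. \<Sum>n\<in>?B. \<Sum>i\<le>m.
      if i + n = k then hom_ext \<alpha> p m * ore_pi \<sigma> \<delta> i m (hom_ext \<alpha> q n) else 0)"
    by (simp add: \<alpha>0 hom_ext_def if_distrib[of \<alpha>] assms(2,3) cong: if_cong)
  also have "\<dots> = ore_mult \<sigma> \<delta> (hom_ext \<alpha> p) (hom_ext \<alpha> q) k"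
    using fin assms(4-6) hom_ext_support_subset[of \<alpha>, OF \<alpha>0]
    by (intro ore_mult_eq_sum_superset[symmetric]) auto
  finally show "hom_ext \<alpha> (ore_mult \<sigma> \<delta> p q) k = ore_mult \<sigma> \<delta> (hom_ext \<alpha> p) (hom_ext \<alpha> q) k" .
qed

lemma ore_ring_endo_hom_ext_imp_commute:
  fixes \<alpha> :: "'a::{ab_group_add,times,one} \<Rightarrow> 'a"
  assumes "ore_ring_endo \<sigma> \<delta> (hom_ext \<alpha>)" and "\<alpha> a = 1"
    and "\<alpha> 0 = 0" and "\<And>x y. \<alpha> (x * y) = \<alpha> x * \<alpha> y" and "\<And>x::'a. 1 * x = x"
    and "\<And>x::'a. 0 * x = 0" and "\<And>x::'a. x * 0 = 0" and "\<And>i m. ore_pi \<sigma> \<delta> i m 0 = 0"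
  shows "\<alpha> (\<delta> b) = \<delta> (\<alpha> b)" and "\<alpha> (\<sigma> b) = \<sigma> (\<alpha> b)"
proof -
  have "hom_ext \<alpha> (ore_mult \<sigma> \<delta> (ore_monom a 1) (ore_monom b 0))
      = ore_mult \<sigma> \<delta> (ore_monom 1 1) (ore_monom (\<alpha> b) 0)"
    using assms(1) ore_monom_in_carrier hom_ext_ore_monom[of \<alpha>, OF assms(3)] assms(2)
    unfolding ore_ring_endo_def by metis
  then have "\<alpha> (ore_mult \<sigma> \<delta> (ore_monom a 1) (ore_monom b 0) k)
      = ore_mult \<sigma> \<delta> (ore_monom 1 1) (ore_monom (\<alpha> b) 0) k" for k
    unfolding hom_ext_def by metis
  from this[of 0] this[of 1] show "\<alpha> (\<delta> b) = \<delta> (\<alpha> b)" and "\<alpha> (\<sigma> b) = \<sigma> (\<alpha> b)"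
    using assms(2,4,5) ore_mult_X_const[OF assms(6-8)] by simp_all
qed

theorem mainTheorem2:
  fixes \<sigma> \<delta> \<alpha> :: "'a::{ab_group_add,times,one} \<Rightarrow> 'a"
  assumes "nonassoc_ring_1 TYPE('a)"
    and "left_R_additive \<sigma>" and "left_R_additive \<delta>"
    and "ring_endo \<alpha>"
    and "\<exists>a. \<alpha> a = 1"
  shows "ore_ring_endo \<sigma> \<delta> (hom_ext \<alpha>) \<longleftrightarrow> (\<alpha> \<circ> \<delta> = \<delta> \<circ> \<alpha> \<and> \<alpha> \<circ> \<sigma> = \<sigma> \<circ> \<alpha>)"
proof -
  note zero = nonassoc_ring_1_mult_zero[OF assms(1)]
  have one: "\<And>x::'a. 1 * x = x"
    using assms(1) unfolding nonassoc_ring_1_def by blast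
  have add: "additive \<sigma>" "additive \<delta>" "additive \<alpha>"
    using left_R_additive_imp_additive[OF assms(1)] assms(2-4) ring_endo_imp_additive by auto
  note \<alpha>0 = additive.zero[OF add(3)]
  note pi0 = ore_pi_zero[of \<sigma> \<delta>, OF additive.zero[OF add(1)] additive.zero[OF add(2)]]
  show ?thesis
  proof
    assume "ore_ring_endo \<sigma> \<delta> (hom_ext \<alpha>)"
    moreover obtain a where "\<alpha> a = 1"
      using assms(5) by blast
    ultimately show "\<alpha> \<circ> \<delta> = \<delta> \<circ> \<alpha> \<and> \<alpha> \<circ> \<sigma> = \<sigma> \<circ> \<alpha>"
      using ore_ring_endo_hom_ext_imp_commute[OF _ _ \<alpha>0 ring_endo_mult[OF assms(4)] one zero pi0]
      by (auto simp: fun_eq_iff)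
  next
    assume "\<alpha> \<circ> \<delta> = \<delta> \<circ> \<alpha> \<and> \<alpha> \<circ> \<sigma> = \<sigma> \<circ> \<alpha>"
    then have "\<And>i m x. \<alpha> (ore_pi \<sigma> \<delta> i m x) = ore_pi \<sigma> \<delta> i m (\<alpha> x)"
      using additive_ore_pi_commute[OF add(3)] by blast
    then show "ore_ring_endo \<sigma> \<delta> (hom_ext \<alpha>)"
      unfolding ore_ring_endo_def
      using hom_ext_in_carrier[of \<alpha>, OF \<alpha>0] hom_ext_ore_add[OF add(3)]
        hom_ext_ore_mult[OF add(3) ring_endo_mult[OF assms(4)] _ zero pi0] by blast
  qed
qed

end
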